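(* Let $\psi,\phi\in \mathbf{\Psi}_n$, and set $m:=\min_{t\in\Omega_n}\frac{\psi(t)}{\phi(t)}$, $M:=\max_{t\in\Omega_n}\frac{\psi(t)}{\phi(t)}$, $m^*:=\min_{s\in\Omega_n}\frac{\psi^*(s)}{\phi^*(s)}$, $M^*:=\max_{s\in\Omega_n}\frac{\psi^*(s)}{\phi^*(s)}$. Then: (i) $\frac{1}{n}\le m\le \frac{\psi(t)}{\phi(t)} \le M\le n$ for all $t\in\Omega_n$; (ii) $\frac{1}{n}\le m^*\le \frac{\psi^*(t)}{\phi^*(t)}\le M^*\le n$ for all $t\in\Omega_n$; (iii) $m\cdot M^*= M\cdot m^*=1$; (iv) $m\cdot|\!|\!|\cdot|\!|\!|_{\phi}\le|\!|\!|\cdot|\!|\!|_{\psi}\le M\cdot|\!|\!|\cdot|\!|\!|_{\phi}$; (v) $\frac{1}{M}\cdot|\!|\!|\cdot|\!|\!|_{\phi^*}\le|\!|\!|\cdot|\!|\!|_{\psi^*}\le\frac{1}{m}\cdot|\!|\!|\cdot|\!|\!|_{\phi^*}$; (vi) $\psi\ge\phi$ if and only if $\psi^*\le\phi^*$; (vii) $\psi\le\phi$ if and only if $\psi^*\ge\phi^*$.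
   Context: Let $(X,\|\cdot\|)$ be a normed vector space, $n\ge2$. $\Omega_n:=\{t\in\mathbb{R}^n\mid t_i\ge0,\ \sum_i t_i=1\}$, $\Omega_n^\circ:=\{t\in\Omega_n\mid t_i<1\ \forall i\}$. $\mathbf{\Psi}_n$ is the class of convex continuous $\psi:\Omega_n\to\mathbb{R}$ with (B1) $\psi(\mathbf{e}_i)=1$ for all standard unit vectors $\mathbf{e}_i$ and (B2) $\psi(t)\ge(1-t_i)\psi\big(\frac{t_1}{1-t_i},\ldots,\frac{t_{i-1}}{1-t_i},0,\frac{t_{i+1}}{1-t_i},\ldots,\frac{t_n}{1-t_i}\big)$ for all $t\in\Omega_n^\circ$, $i=1,\ldots,n$. For $\psi\in\mathbf{\Psi}_n$, the dual function is $\psi^*(s):=\max_{t\in\Omega_n}\frac{\langle t,s\rangle}{\psi(t)}$, $s\in\Omega_n$. The norm $|\!|\!|\cdot|\!|\!|_\psi$ on $X^n$ is $|\!|\!|x|\!|\!|_\psi:=\big(\sum_{i}\|x_i\|\big)\,\psi\big(\frac{\|x_1\|}{\sum_{i}\|x_i\|},\ldots,\frac{\|x_n\|}{\sum_{i}\|x_i\|}\big)$ for $x\ne0$, $|\!|\!|0|\!|\!|_\psi:=0$; $|\!|\!|\cdot|\!|\!|_{\psi^*}$ denotes its dual norm on $(X^n)^*\cong(X^* )^n$, which equals the analogous construction with $\psi^*$ and the dual norm on $X^*$. Inequalities $\psi\ge\phi$ etc. are pointwise on $\Omega_n$. *)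

theory Defs
  imports "HOL-Analysis.Analysis"
begin

text \<open>Index set {1..n} is a finite type 'n, with n = CARD('n).\<close>

definition Omega :: "(real^'n) set" where
  "Omega = {t. (\<forall>i. 0 \<le> t$i) \<and> (\<Sum>i\<in>UNIV. t$i) = 1}"

definition Omega_int :: "(real^'n) set" where
  "Omega_int = {t \<in> Omega. \<forall>i. t$i < 1}"

definition PsiClass :: "((real^'n) \<Rightarrow> real) set" where
  "PsiClass = {psi. convex_on Omega psi \<and> continuous_on Omega psi
      \<and> (\<forall>i. psi (axis i 1) = 1)
      \<and> (\<forall>t\<in>Omega_int. \<forall>i.
            psi t \<ge> (1 - t$i) * psi (\<chi> j. if j = i then 0 else t$j / (1 - t$i)))}"

definition dual_fun :: "((real^'n) \<Rightarrow> real) \<Rightarrow> (real^'n) \<Rightarrow> real" where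
  "dual_fun psi s = (SUP t\<in>Omega. (t \<bullet> s) / psi t)"

definition psi_norm :: "((real^'n) \<Rightarrow> real) \<Rightarrow> ('n \<Rightarrow> 'a::real_normed_vector) \<Rightarrow> real" where
  "psi_norm psi x = (let S = (\<Sum>i\<in>UNIV. norm (x i)) in
      if S = 0 then 0 else S * psi (\<chi> i. norm (x i) / S))"

text \<open>Dual norm of psi_norm on (X^n)^* = (X^*)^n: a tuple f of bounded linear
  functionals acts by x \<mapsto> \<Sum>i f i (x i).\<close>
definition psi_dual_norm :: "((real^'n) \<Rightarrow> real) \<Rightarrow> ('n \<Rightarrow> 'a::real_normed_vector \<Rightarrow> real) \<Rightarrow> real" where
  "psi_dual_norm psi f = (SUP x\<in>{x. psi_norm psi x \<le> 1}. \<bar>\<Sum>i\<in>UNIV. f i (x i)\<bar>)"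

end

(*
  Extend psi positively homogeneously to the nonnegative orthant. Convexity of psi makes
  the extension sublinear, and (B2) makes it monotone in each coordinate. Monotonicity gives
  t_i \<le> psi(t) and convexity gives psi(t) \<le> 1; testing the dual at the vertices gives
  s_i \<le> psi^*(s) \<le> 1. Since some coordinate of a point of the simplex is at least 1/n,
  both psi and psi^* take values in [1/n, 1], which is (i) and (ii).

  The ratio psi/phi attains its minimum m at some t0. Separating t0/phi(t0) from the open
  unit ball of the extension of phi (enlarged downwards, so that the separating functional
  is nonnegative) gives s0 in the simplex with phi^*(s0) = <t0,s0>/phi(t0)
  = m <t0,s0>/psi(t0) \<le> m psi^*(s0), while m psi^* \<le> phi^* holds everywhere because
  m phi \<le> psi. Hence max psi^*/phi^* = 1/m, and symmetrically min psi^*/phi^* = 1/M.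
*)

theory Submission
  imports Defs
begin

section \<open>The simplex\<close>

lemma Omega_iff: "t \<in> Omega \<longleftrightarrow> 0 \<le> t \<and> (\<Sum>i\<in>UNIV. t$i) = 1"
  by (simp add: Omega_def less_eq_vec_def)

lemma axis_in_Omega: "axis i 1 \<in> Omega"
  by (simp add: Omega_def axis_def)

lemma Omega_nonempty: "Omega \<noteq> {}"
  using axis_in_Omega by blast

lemma convex_Omega: "convex Omega"
  by (rule convexI) (auto simp: Omega_def sum.distrib sum_distrib_left[symmetric])

lemma compact_Omega: "compact (Omega :: (real^'n) set)"
proof -
  have "Omega = (\<Inter>i. {t. 0 \<le> t$i}) \<inter> {t. (\<chi> i. 1) \<bullet> t = 1}"
    by (auto simp: Omega_def inner_vec_def)
  also have "closed \<dots>"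
    by (intro closed_Int closed_INT closed_hyperplane ballI closed_halfspace_component_ge_cart)
  finally have "closed (Omega :: (real^'n) set)" .
  moreover have "norm t \<le> 1" if "t \<in> Omega" for t :: "real^'n"
    using norm_le_l1_cart[of t] that by (simp add: Omega_def)
  then have "bounded (Omega :: (real^'n) set)"
    unfolding bounded_iff by blast
  ultimately show ?thesis
    by (simp add: compact_eq_bounded_closed)
qed

lemma Omega_eq_axis:
  assumes t: "t \<in> Omega" and "1 \<le> t$j"
  shows "t = axis j 1"
proof -
  have nonneg: "\<And>k. 0 \<le> t$k" and sum1: "(\<Sum>k\<in>UNIV. t$k) = 1"
    using t by (auto simp: Omega_def)
  have "t$j + (\<Sum>k\<in>UNIV - {j}. t$k) = 1"
    using sum1 by (simp add: sum.remove[of UNIV j])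
  then have "(\<Sum>k\<in>UNIV - {j}. t$k) = 0" and "t$j = 1"
    using \<open>1 \<le> t$j\<close> sum_nonneg[of "UNIV - {j}" "\<lambda>k. t$k"] nonneg by auto
  then have "t$k = 0" if "k \<noteq> j" for k
    using that nonneg by (simp add: sum_nonneg_eq_0_iff)
  with \<open>t$j = 1\<close> show ?thesis
    by (auto simp: vec_eq_iff axis_def)
qed

section \<open>The homogeneous extension of psi to the nonnegative orthant\<close>

lemma PsiClassD:
  assumes "psi \<in> PsiClass"
  shows "convex_on Omega psi" "continuous_on Omega psi" "psi (axis i 1) = 1"
    "t \<in> Omega_int \<Longrightarrow> (1 - t$i) * psi (\<chi> j. if j = i then 0 else t$j / (1 - t$i)) \<le> psi t"
  using assms by (auto simp: PsiClass_def)

text \<open>This is the absolute norm on \<open>\<real>\<^sup>n\<close> with profile psi (the case X = \<real> of psi_norm),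
  restricted to the nonnegative orthant.\<close>

definition hom_ext :: "(real^'n \<Rightarrow> real) \<Rightarrow> real^'n \<Rightarrow> real" where
  "hom_ext psi y = (let S = (\<Sum>i\<in>UNIV. y$i) in if S = 0 then 0 else S * psi (\<chi> i. y$i / S))"

lemma psi_norm_eq_hom_ext: "psi_norm psi x = hom_ext psi (\<chi> i. norm (x i))"
  by (simp add: psi_norm_def hom_ext_def Let_def)

lemma hom_ext_zero [simp]: "hom_ext psi 0 = 0"
  by (simp add: hom_ext_def)

lemma hom_ext_Omega: "t \<in> Omega \<Longrightarrow> hom_ext psi t = psi t"
  by (simp add: hom_ext_def Omega_def)

lemma hom_ext_scaleR:
  assumes "0 \<le> c"
  shows "hom_ext psi (c *\<^sub>R y) = c * hom_ext psi y"
proof (cases "c = 0")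
  case False
  have "(\<chi> i. c * y$i / (c * (\<Sum>i\<in>UNIV. y$i))) = (\<chi> i. y$i / (\<Sum>i\<in>UNIV. y$i))"
    using False by (simp add: vec_eq_iff)
  then show ?thesis
    using False by (simp add: hom_ext_def Let_def sum_distrib_left[symmetric])
qed (simp add: hom_ext_def)

lemma nonneg_vec_decompose:
  fixes y :: "real^'n"
  assumes "0 \<le> y"
  obtains a t where "0 \<le> a" "t \<in> Omega" "y = a *\<^sub>R t"
proof (cases "y = 0")
  case True
  then show ?thesis
    using that[OF order_refl axis_in_Omega] by simp
next
  case False
  define a where "a = (\<Sum>i\<in>UNIV. y$i)"
  have "0 \<le> y$i" for i
    using assms by (simp add: less_eq_vec_def)
  then have "a \<noteq> 0"
    using False by (simp add: a_def sum_nonneg_eq_0_iff vec_eq_iff)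
  moreover have "0 \<le> a"
    using \<open>\<And>i. 0 \<le> y$i\<close> by (simp add: a_def sum_nonneg)
  ultimately have "(1 / a) *\<^sub>R y \<in> Omega" and "y = a *\<^sub>R ((1 / a) *\<^sub>R y)"
    using \<open>\<And>i. 0 \<le> y$i\<close> by (simp_all add: Omega_def a_def sum_divide_distrib[symmetric])
  with \<open>0 \<le> a\<close> show ?thesis
    using that by blast
qed

lemma hom_ext_add_le:
  assumes psi: "convex_on Omega psi" and "0 \<le> x" "0 \<le> y"
  shows "hom_ext psi (x + y) \<le> hom_ext psi x + hom_ext psi y"
proof -
  obtain a t b u where ab: "0 \<le> a" "0 \<le> b" and tu: "t \<in> Omega" "u \<in> Omega"
    and xy: "x = a *\<^sub>R t" "y = b *\<^sub>R u"
    using nonneg_vec_decompose[OF \<open>0 \<le> x\<close>] nonneg_vec_decompose[OF \<open>0 \<le> y\<close>] by metis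
  show ?thesis
  proof (cases "a + b = 0")
    case True
    then have "a = 0" "b = 0"
      using ab by auto
    then show ?thesis
      using xy by simp
  next
    case False
    define \<theta> where "\<theta> = b / (a + b)"
    have \<theta>: "0 \<le> \<theta>" "\<theta> \<le> 1" "(a + b) * (1 - \<theta>) = a" "(a + b) * \<theta> = b"
      using ab False by (auto simp: \<theta>_def field_simps)
    have comb: "(1 - \<theta>) *\<^sub>R t + \<theta> *\<^sub>R u \<in> Omega"
      using convexD_alt[OF convex_Omega tu \<theta>(1,2)] by (simp add: algebra_simps)
    have "x + y = (a + b) *\<^sub>R ((1 - \<theta>) *\<^sub>R t + \<theta> *\<^sub>R u)"
      by (simp add: xy \<theta>(3,4) scaleR_add_right)
    then have "hom_ext psi (x + y) = (a + b) * psi ((1 - \<theta>) *\<^sub>R t + \<theta> *\<^sub>R u)"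
      using ab comb by (simp add: hom_ext_scaleR hom_ext_Omega)
    also have "\<dots> \<le> (a + b) * ((1 - \<theta>) * psi t + \<theta> * psi u)"
      using convex_onD[OF psi \<theta>(1,2) tu] ab by (simp add: mult_left_mono)
    also have "\<dots> = hom_ext psi x + hom_ext psi y"
      using ab tu by (simp add: xy \<theta>(3,4) hom_ext_scaleR hom_ext_Omega distrib_left flip: mult.assoc)
    finally show ?thesis .
  qed
qed

lemma hom_ext_convex_comb:
  assumes psi: "convex_on Omega psi" and "0 \<le> x" "0 \<le> y" "0 \<le> u" "u \<le> 1"
  shows "hom_ext psi ((1 - u) *\<^sub>R x + u *\<^sub>R y) \<le> (1 - u) * hom_ext psi x + u * hom_ext psi y"
proof -
  have "0 \<le> (1 - u) *\<^sub>R x" "0 \<le> u *\<^sub>R y"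
    using assms by (auto simp: less_eq_vec_def)
  from hom_ext_add_le[OF psi this] show ?thesis
    using assms by (simp add: hom_ext_scaleR)
qed

lemma hom_ext_remove_component_Omega:
  assumes psi: "psi \<in> PsiClass" and t: "t \<in> Omega"
  shows "hom_ext psi (t - t$i *\<^sub>R axis i 1) \<le> psi t"
proof (cases "t \<in> Omega_int")
  case True
  then have ti: "t$i < 1"
    by (simp add: Omega_int_def)
  define w where "w = (\<chi> j. if j = i then 0 else t$j / (1 - t$i))"
  have tw: "t - t$i *\<^sub>R axis i 1 = (1 - t$i) *\<^sub>R w"
    using ti by (auto simp: vec_eq_iff w_def axis_def)
  have "(\<Sum>j\<in>UNIV. (t - t$i *\<^sub>R axis i 1)$j) = (\<Sum>j\<in>UNIV. t$j) - t$i * (\<Sum>j\<in>UNIV. axis i 1 $ j)"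
    by (simp add: sum_subtractf sum_distrib_left)
  then have "(\<Sum>j\<in>UNIV. (t - t$i *\<^sub>R axis i 1)$j) = 1 - t$i"
    using t by (simp add: Omega_def axis_def)
  then have "(1 - t$i) * (\<Sum>j\<in>UNIV. w$j) = 1 - t$i"
    by (simp add: tw sum_distrib_left)
  then have "w \<in> Omega"
    using t ti by (auto simp: Omega_def w_def)
  then have "hom_ext psi (t - t$i *\<^sub>R axis i 1) = (1 - t$i) * psi w"
    using ti by (simp add: tw hom_ext_scaleR hom_ext_Omega)
  also have "\<dots> \<le> psi t"
    using PsiClassD(4)[OF psi True] by (simp add: w_def)
  finally show ?thesis .
next
  case False
  then obtain j where "1 \<le> t$j"
    using t by (auto simp: Omega_int_def not_less)
  then have tj: "t = axis j 1"
    using Omega_eq_axis[OF t] by blast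
  show ?thesis
  proof (cases "j = i")
    case True
    then show ?thesis
      using PsiClassD(3)[OF psi] by (simp add: tj)
  next
    case False
    then have "t - t$i *\<^sub>R axis i 1 = t"
      by (simp add: tj axis_def)
    then show ?thesis
      by (simp add: hom_ext_Omega[OF t])
  qed
qed

lemma hom_ext_remove_component:
  assumes psi: "psi \<in> PsiClass" and "0 \<le> y"
  shows "hom_ext psi (y - y$i *\<^sub>R axis i 1) \<le> hom_ext psi y"
proof -
  obtain a t where a: "0 \<le> a" and t: "t \<in> Omega" and y: "y = a *\<^sub>R t"
    using nonneg_vec_decompose[OF \<open>0 \<le> y\<close>] .
  have "y - y$i *\<^sub>R axis i 1 = a *\<^sub>R (t - t$i *\<^sub>R axis i 1)"
    by (simp add: y algebra_simps)
  then show ?thesis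
    using hom_ext_remove_component_Omega[OF psi t, of i] a
    by (simp add: y hom_ext_scaleR hom_ext_Omega[OF t] mult_left_mono)
qed

lemma hom_ext_decrease_component:
  assumes psi: "psi \<in> PsiClass" and y: "0 \<le> y" and d: "0 \<le> d" "d \<le> y$i"
  shows "hom_ext psi (y - d *\<^sub>R axis i 1) \<le> hom_ext psi y"
proof (cases "y$i = 0")
  case True
  then show ?thesis
    using d by simp
next
  case False
  define u where "u = d / y$i"
  have u: "0 \<le> u" "u \<le> 1"
    using d False by (auto simp: u_def)
  have z: "0 \<le> y - y$i *\<^sub>R axis i 1"
    using y by (simp add: less_eq_vec_def axis_def)
  have "y - d *\<^sub>R axis i 1 = (1 - u) *\<^sub>R y + u *\<^sub>R (y - y$i *\<^sub>R axis i 1)"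
    using False by (simp add: u_def algebra_simps)
  then have "hom_ext psi (y - d *\<^sub>R axis i 1)
      \<le> (1 - u) * hom_ext psi y + u * hom_ext psi (y - y$i *\<^sub>R axis i 1)"
    using hom_ext_convex_comb[OF PsiClassD(1)[OF psi] y z u] by simp
  also have "\<dots> \<le> (1 - u) * hom_ext psi y + u * hom_ext psi y"
    using hom_ext_remove_component[OF psi y] u by (simp add: mult_left_mono)
  finally show ?thesis
    by (simp add: algebra_simps)
qed

lemma hom_ext_mono:
  fixes x y :: "real^'n"
  assumes psi: "psi \<in> PsiClass" and "0 \<le> x" "x \<le> y"
  shows "hom_ext psi x \<le> hom_ext psi y"
proof -
  have "\<forall>x y. 0 \<le> x \<longrightarrow> x \<le> y \<longrightarrow> (\<forall>j. j \<notin> F \<longrightarrow> x$j = y$j) \<longrightarrow> hom_ext psi x \<le> hom_ext psi y"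
    if "finite F" for F :: "'n set"
    using that
  proof (induction F)
    case empty
    then show ?case
      by (simp flip: vec_eq_iff)
  next
    case (insert i F)
    show ?case
    proof (intro allI impI)
      fix x y :: "real^'n"
      assume x: "0 \<le> x" and xy: "x \<le> y" and agree: "\<forall>j. j \<notin> insert i F \<longrightarrow> x$j = y$j"
      define z where "z = y - (y$i - x$i) *\<^sub>R axis i 1"
      have "hom_ext psi x \<le> hom_ext psi z"
        using insert.IH x xy agree by (auto simp: z_def less_eq_vec_def axis_def)
      also have "\<dots> \<le> hom_ext psi y"
        unfolding z_def using x xy
        by (intro hom_ext_decrease_component[OF psi]) (auto simp: less_eq_vec_def intro: order_trans)
      finally show "hom_ext psi x \<le> hom_ext psi y" .
    qed
  qed
  from this[of UNIV] show ?thesis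
    using assms by simp
qed

lemma component_le_hom_ext:
  assumes psi: "psi \<in> PsiClass" and "0 \<le> y"
  shows "y$i \<le> hom_ext psi y"
proof -
  have "0 \<le> y$i *\<^sub>R axis i (1::real)" "y$i *\<^sub>R axis i 1 \<le> y"
    using \<open>0 \<le> y\<close> by (auto simp: less_eq_vec_def axis_def)
  then have "hom_ext psi (y$i *\<^sub>R axis i 1) \<le> hom_ext psi y"
    by (rule hom_ext_mono[OF psi])
  moreover have "0 \<le> y$i"
    using \<open>0 \<le> y\<close> by (simp add: less_eq_vec_def)
  ultimately show ?thesis
    by (simp add: hom_ext_scaleR hom_ext_Omega[OF axis_in_Omega] PsiClassD(3)[OF psi])
qed

lemma component_le_PsiClass: "psi \<in> PsiClass \<Longrightarrow> t \<in> Omega \<Longrightarrow> t$i \<le> psi t"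
  using component_le_hom_ext[of psi t i] by (simp add: Omega_iff hom_ext_Omega)

lemma PsiClass_le_one:
  assumes psi: "psi \<in> PsiClass" and t: "t \<in> Omega"
  shows "psi t \<le> 1"
proof -
  have "t = (\<Sum>i\<in>UNIV. t$i *\<^sub>R axis i 1)"
    using basis_expansion[of t] by (simp add: scalar_mult_eq_scaleR)
  also have "psi \<dots> \<le> (\<Sum>i\<in>UNIV. t$i * psi (axis i 1))"
    using t axis_in_Omega
    by (intro convex_on_sum[OF _ _ PsiClassD(1)[OF psi]]) (auto simp: Omega_def)
  finally show ?thesis
    using t by (simp add: PsiClassD(3)[OF psi] Omega_def)
qed

lemma Omega_large_component:
  fixes t :: "real^'n"
  assumes "t \<in> Omega"
  obtains i where "1 / real CARD('n) \<le> t$i"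
proof (rule ccontr)
  assume "\<not> thesis"
  then have "\<forall>i. t$i < 1 / real CARD('n)"
    using that by (meson not_le)
  then have "(\<Sum>i\<in>UNIV. t$i) < (\<Sum>i\<in>(UNIV :: 'n set). 1 / real CARD('n))"
    by (intro sum_strict_mono) auto
  also have "\<dots> = 1"
    by simp
  finally show False
    using assms by (simp add: Omega_def)
qed

lemma PsiClass_bounds:
  fixes psi :: "real^'n \<Rightarrow> real"
  assumes "psi \<in> PsiClass" and t: "t \<in> Omega"
  shows "1 / real CARD('n) \<le> psi t" "psi t \<le> 1"
proof -
  obtain i where "1 / real CARD('n) \<le> t$i"
    using Omega_large_component[OF t] .
  then show "1 / real CARD('n) \<le> psi t"
    using component_le_PsiClass[OF assms, of i] by linarith
  show "psi t \<le> 1"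
    using PsiClass_le_one[OF assms] .
qed

lemma PsiClass_pos: "psi \<in> PsiClass \<Longrightarrow> t \<in> Omega \<Longrightarrow> 0 < psi t"
  using PsiClass_bounds(1)[of psi t] by (simp add: order_less_le_trans[rotated])

section \<open>The dual function\<close>

lemma inner_le_PsiClass:
  assumes psi: "psi \<in> PsiClass" and s: "s \<in> Omega" and t: "t \<in> Omega"
  shows "t \<bullet> s \<le> psi t"
proof -
  have "t \<bullet> s = (\<Sum>i\<in>UNIV. t$i * s$i)"
    by (simp add: inner_vec_def)
  also have "\<dots> \<le> (\<Sum>i\<in>UNIV. psi t * s$i)"
    using component_le_PsiClass[OF psi t] s by (intro sum_mono mult_right_mono) (auto simp: Omega_def)
  also have "\<dots> = psi t"
    using s by (simp add: Omega_def flip: sum_distrib_left)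
  finally show ?thesis .
qed

lemma inner_nonneg_Omega: "s \<in> Omega \<Longrightarrow> t \<in> Omega \<Longrightarrow> 0 \<le> t \<bullet> s"
  by (auto simp: Omega_def inner_vec_def intro!: sum_nonneg)

lemma dual_fun_upper:
  assumes psi: "psi \<in> PsiClass" and s: "s \<in> Omega" and t: "t \<in> Omega"
  shows "t \<bullet> s / psi t \<le> dual_fun psi s"
proof -
  have "bdd_above ((\<lambda>t. t \<bullet> s / psi t) ` Omega)"
    using inner_le_PsiClass[OF psi s] PsiClass_pos[OF psi]
    by (intro bdd_aboveI[where M = 1]) (auto simp: divide_le_eq_1)
  then show ?thesis
    unfolding dual_fun_def using t by (rule cSUP_upper2) simp
qed

lemma dual_fun_least: "(\<And>t. t \<in> Omega \<Longrightarrow> t \<bullet> s / psi t \<le> c) \<Longrightarrow> dual_fun psi s \<le> c"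
  unfolding dual_fun_def by (rule cSUP_least[OF Omega_nonempty])

lemma dual_fun_bounds:
  fixes psi :: "real^'n \<Rightarrow> real"
  assumes psi: "psi \<in> PsiClass" and s: "s \<in> Omega"
  shows "1 / real CARD('n) \<le> dual_fun psi s" "dual_fun psi s \<le> 1"
proof -
  obtain i where "1 / real CARD('n) \<le> s$i"
    using Omega_large_component[OF s] .
  also have "s$i = axis i 1 \<bullet> s / psi (axis i 1)"
    by (simp add: PsiClassD(3)[OF psi] inner_axis')
  also have "\<dots> \<le> dual_fun psi s"
    by (rule dual_fun_upper[OF psi s axis_in_Omega])
  finally show "1 / real CARD('n) \<le> dual_fun psi s" .
  show "dual_fun psi s \<le> 1"
    using inner_le_PsiClass[OF psi s] PsiClass_pos[OF psi]
    by (intro dual_fun_least) (simp add: divide_le_eq_1)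
qed

lemma dual_fun_pos: "psi \<in> PsiClass \<Longrightarrow> s \<in> Omega \<Longrightarrow> 0 < dual_fun psi s"
  using dual_fun_bounds(1)[of psi s] by (simp add: order_less_le_trans[rotated])

lemma dual_fun_antimono_scaled:
  assumes psi: "psi \<in> PsiClass" and phi: "phi \<in> PsiClass" and k: "0 < k"
    and le: "\<And>t. t \<in> Omega \<Longrightarrow> k * phi t \<le> psi t" and s: "s \<in> Omega"
  shows "k * dual_fun psi s \<le> dual_fun phi s"
proof -
  have "t \<bullet> s / psi t \<le> dual_fun phi s / k" if t: "t \<in> Omega" for t
  proof -
    have "t \<bullet> s / psi t \<le> t \<bullet> s / (k * phi t)"
      using inner_nonneg_Omega[OF s t] le[OF t] PsiClass_pos[OF phi t] PsiClass_pos[OF psi t] k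
      by (intro divide_left_mono) auto
    also have "\<dots> = (t \<bullet> s / phi t) / k"
      by simp
    also have "\<dots> \<le> dual_fun phi s / k"
      using k by (intro divide_right_mono dual_fun_upper[OF phi s t]) simp
    finally show ?thesis .
  qed
  then have "dual_fun psi s \<le> dual_fun phi s / k"
    by (rule dual_fun_least)
  then show ?thesis
    using k by (simp add: field_simps)
qed

lemma nonneg_functional_supporting_unit_ball:
  fixes x0 :: "real^'n"
  assumes psi: "psi \<in> PsiClass" and x0: "0 \<le> x0" "hom_ext psi x0 = 1"
  obtains c where "0 \<le> c" "c \<noteq> 0" "\<And>y. 0 \<le> y \<Longrightarrow> hom_ext psi y < 1 \<Longrightarrow> c \<bullet> y \<le> c \<bullet> x0"
proof -
  \<comment> \<open>S is down-closed, which forces the separating functional to be nonnegative.\<close>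
  define S where "S = {y. \<exists>x. 0 \<le> x \<and> hom_ext psi x < 1 \<and> y \<le> x}"
  have "convex S"
  proof (rule convexI)
    fix y1 y2 and u v :: real
    assume "y1 \<in> S" "y2 \<in> S" and uv: "0 \<le> u" "0 \<le> v" "u + v = 1"
    then obtain x1 x2 where x1: "0 \<le> x1" "hom_ext psi x1 < 1" "y1 \<le> x1"
      and x2: "0 \<le> x2" "hom_ext psi x2 < 1" "y2 \<le> x2"
      by (auto simp: S_def)
    have "hom_ext psi (u *\<^sub>R x1 + v *\<^sub>R x2) \<le> u * hom_ext psi x1 + v * hom_ext psi x2"
      using hom_ext_convex_comb[OF PsiClassD(1)[OF psi] x1(1) x2(1), of v] uv
      by (simp add: eq_diff_eq[symmetric])
    also have "\<dots> < 1"
      using x1(2) x2(2) uv by (rule convex_bound_lt)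
    finally have "hom_ext psi (u *\<^sub>R x1 + v *\<^sub>R x2) < 1" .
    moreover have "0 \<le> u *\<^sub>R x1 + v *\<^sub>R x2" "u *\<^sub>R y1 + v *\<^sub>R y2 \<le> u *\<^sub>R x1 + v *\<^sub>R x2"
      using x1 x2 uv by (auto simp: less_eq_vec_def intro!: add_mono mult_left_mono)
    ultimately show "u *\<^sub>R y1 + v *\<^sub>R y2 \<in> S"
      by (auto simp: S_def)
  qed
  moreover have "0 \<in> S"
    by (auto simp: S_def)
  moreover have "x0 \<notin> S"
    using hom_ext_mono[OF psi] x0 by (force simp: S_def)
  ultimately obtain a b where "a \<noteq> 0" "a \<bullet> x0 \<le> b" "\<And>y. y \<in> S \<Longrightarrow> b \<le> a \<bullet> y"
    by (metis empty_iff separating_hyperplane_set_point_inaff)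
  define c where "c = - a"
  have sep: "c \<bullet> y \<le> c \<bullet> x0" if "y \<in> S" for y
    using that \<open>a \<bullet> x0 \<le> b\<close> \<open>\<And>y. y \<in> S \<Longrightarrow> b \<le> a \<bullet> y\<close> by (fastforce simp: c_def)
  have "0 \<le> c$i" for i
  proof (rule ccontr)
    assume neg: "\<not> 0 \<le> c$i"
    define k where "k = (\<bar>c \<bullet> x0\<bar> + 1) / - c$i"
    have "0 \<le> k"
      using neg by (simp add: k_def divide_nonneg_neg)
    then have "- k *\<^sub>R axis i 1 \<in> S"
      by (auto simp: S_def less_eq_vec_def axis_def intro!: exI[of _ 0])
    from sep[OF this] show False
      using neg by (simp add: k_def inner_axis)
  qed
  moreover have "c \<noteq> 0"
    using \<open>a \<noteq> 0\<close> by (simp add: c_def)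
  moreover have "y \<in> S" if "0 \<le> y" "hom_ext psi y < 1" for y
    using that by (auto simp: S_def)
  ultimately show ?thesis
    using that[of c] sep by (simp add: less_eq_vec_def)
qed

lemma dual_fun_attained:
  assumes psi: "psi \<in> PsiClass" and t0: "t0 \<in> Omega"
  obtains s where "s \<in> Omega" "dual_fun psi s = t0 \<bullet> s / psi t0"
proof -
  define x0 where "x0 = (1 / psi t0) *\<^sub>R t0"
  have "0 \<le> x0" "hom_ext psi x0 = 1"
    using t0 PsiClass_pos[OF psi t0]
    by (auto simp: x0_def Omega_iff less_eq_vec_def hom_ext_scaleR hom_ext_Omega)
  then obtain c where c: "0 \<le> c" "c \<noteq> 0"
    and sep: "\<And>y. 0 \<le> y \<Longrightarrow> hom_ext psi y < 1 \<Longrightarrow> c \<bullet> y \<le> c \<bullet> x0"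
    using nonneg_functional_supporting_unit_ball[OF psi] by blast
  have le: "t \<bullet> c / psi t \<le> t0 \<bullet> c / psi t0" if t: "t \<in> Omega" for t
  proof -
    have "z * (c \<bullet> ((1 / psi t) *\<^sub>R t)) \<le> c \<bullet> x0" if "0 < z" "z < 1" for z
      using sep[of "(z / psi t) *\<^sub>R t"] that t PsiClass_pos[OF psi t]
      by (simp add: Omega_iff less_eq_vec_def hom_ext_scaleR hom_ext_Omega)
    then have "c \<bullet> ((1 / psi t) *\<^sub>R t) \<le> c \<bullet> x0"
      by (rule field_le_mult_one_interval)
    then show ?thesis
      by (simp add: x0_def inner_commute)
  qed
  define \<sigma> where "\<sigma> = (\<Sum>i\<in>UNIV. c$i)"
  obtain j where "c$j \<noteq> 0"
    using c(2) by (auto simp: vec_eq_iff)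
  then have "0 < \<sigma>"
    using c(1) unfolding \<sigma>_def less_eq_vec_def
    by (intro sum_pos2[of UNIV j]) (auto simp: order.strict_iff_order)
  define s where "s = (1 / \<sigma>) *\<^sub>R c"
  have s: "s \<in> Omega"
    using c \<open>0 < \<sigma>\<close> by (simp add: s_def Omega_iff less_eq_vec_def \<sigma>_def flip: sum_divide_distrib)
  have quot: "t \<bullet> s / psi t = (t \<bullet> c / psi t) / \<sigma>" for t
    by (simp add: s_def)
  have "dual_fun psi s \<le> t0 \<bullet> s / psi t0"
  proof (rule dual_fun_least)
    show "t \<bullet> s / psi t \<le> t0 \<bullet> s / psi t0" if "t \<in> Omega" for t
      unfolding quot using \<open>0 < \<sigma>\<close> by (intro divide_right_mono le[OF that]) simp
  qed
  with dual_fun_upper[OF psi s t0] show ?thesis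
    using that s by simp
qed

lemma dual_fun_scaled_attained:
  assumes psi: "psi \<in> PsiClass" and phi: "phi \<in> PsiClass" and k: "0 < k"
    and le: "\<And>t. t \<in> Omega \<Longrightarrow> k * phi t \<le> psi t" and t0: "t0 \<in> Omega" "psi t0 = k * phi t0"
  obtains s where "s \<in> Omega" "dual_fun phi s = k * dual_fun psi s"
proof -
  obtain s where s: "s \<in> Omega" and attained: "dual_fun phi s = t0 \<bullet> s / phi t0"
    using dual_fun_attained[OF phi t0(1)] .
  have "dual_fun phi s = k * (t0 \<bullet> s / psi t0)"
    using attained k t0(2) by simp
  also have "\<dots> \<le> k * dual_fun psi s"
    using dual_fun_upper[OF psi s t0(1)] by (rule mult_left_mono) (use k in simp)
  finally show ?thesis
    using dual_fun_antimono_scaled[OF psi phi k le s] that s by simp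
qed

section \<open>Extremal ratios\<close>

lemma ratio_INF_SUP_bounds:
  fixes f g :: "'a \<Rightarrow> real"
  assumes "A \<noteq> {}" "0 < N" "x \<in> A"
    and f: "\<And>x. x \<in> A \<Longrightarrow> 1 / N \<le> f x \<and> f x \<le> 1"
    and g: "\<And>x. x \<in> A \<Longrightarrow> 1 / N \<le> g x \<and> g x \<le> 1"
  shows "1 / N \<le> (INF x\<in>A. f x / g x) \<and> (INF x\<in>A. f x / g x) \<le> f x / g x
    \<and> f x / g x \<le> (SUP x\<in>A. f x / g x) \<and> (SUP x\<in>A. f x / g x) \<le> N"
proof -
  have bounds: "1 / N \<le> f x / g x \<and> f x / g x \<le> N" if "x \<in> A" for x
  proof -
    have "0 < f x" "0 < g x"
      using f[OF that] g[OF that] \<open>0 < N\<close> by (auto intro: order_less_le_trans[rotated])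
    moreover have "f x \<le> f x / g x" "f x / g x \<le> 1 / g x" "1 / g x \<le> N"
      using f[OF that] g[OF that] \<open>0 < N\<close> calculation
      by (auto simp: le_divide_eq divide_le_eq mult_le_cancel_left1 divide_right_mono mult.commute)
    ultimately show ?thesis
      using f[OF that] by linarith
  qed
  then have "bdd_below ((\<lambda>x. f x / g x) ` A)" "bdd_above ((\<lambda>x. f x / g x) ` A)"
    by (meson bdd_belowI2 bdd_aboveI2)+
  then show ?thesis
    using bounds \<open>A \<noteq> {}\<close> \<open>x \<in> A\<close>
    by (auto intro: cINF_lower cSUP_upper cINF_greatest cSUP_least)
qed

lemma INF_ratio_eqI:
  fixes f g :: "'a \<Rightarrow> real"
  assumes "\<And>x. x \<in> A \<Longrightarrow> 0 < g x" "\<And>x. x \<in> A \<Longrightarrow> k * g x \<le> f x"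
    and "z \<in> A" "f z = k * g z"
  shows "(INF x\<in>A. f x / g x) = k"
proof (rule cInf_eq_minimum)
  show "k \<in> (\<lambda>x. f x / g x) ` A"
    using assms(1)[of z] assms(3,4) by (auto intro!: image_eqI[of _ _ z])
qed (use assms in \<open>auto simp: le_divide_eq\<close>)

lemma SUP_ratio_eqI:
  fixes f g :: "'a \<Rightarrow> real"
  assumes "\<And>x. x \<in> A \<Longrightarrow> 0 < g x" "\<And>x. x \<in> A \<Longrightarrow> f x \<le> k * g x"
    and "z \<in> A" "f z = k * g z"
  shows "(SUP x\<in>A. f x / g x) = k"
proof (rule cSup_eq_maximum)
  show "k \<in> (\<lambda>x. f x / g x) ` A"
    using assms(1)[of z] assms(3,4) by (auto intro!: image_eqI[of _ _ z])
qed (use assms in \<open>auto simp: divide_le_eq\<close>)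

lemma continuous_on_PsiClass_ratio:
  "psi \<in> PsiClass \<Longrightarrow> phi \<in> PsiClass \<Longrightarrow> continuous_on Omega (\<lambda>t. psi t / phi t)"
  using PsiClass_pos by (fastforce intro: continuous_on_divide PsiClassD(2))

lemma INF_PsiClass_ratio_attained:
  fixes psi phi :: "real^'n \<Rightarrow> real"
  assumes psi: "psi \<in> PsiClass" and phi: "phi \<in> PsiClass"
  defines "m \<equiv> INF t\<in>Omega. psi t / phi t"
  obtains t0 where "0 < m" "t0 \<in> Omega" "psi t0 = m * phi t0" "\<And>t. t \<in> Omega \<Longrightarrow> m * phi t \<le> psi t"
proof -
  obtain t0 where t0: "t0 \<in> Omega" and min: "\<And>t. t \<in> Omega \<Longrightarrow> psi t0 / phi t0 \<le> psi t / phi t"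
    using continuous_attains_inf[OF compact_Omega Omega_nonempty continuous_on_PsiClass_ratio[OF psi phi]]
    by blast
  define k where "k = psi t0 / phi t0"
  have le: "k * phi t \<le> psi t" if "t \<in> Omega" for t
    using min[OF that] PsiClass_pos[OF phi that] by (simp add: k_def le_divide_eq)
  have eq: "psi t0 = k * phi t0" and "0 < k"
    using PsiClass_pos[OF phi t0] PsiClass_pos[OF psi t0] by (simp_all add: k_def)
  have "m = k"
    unfolding m_def using PsiClass_pos[OF phi] le t0 eq by (rule INF_ratio_eqI)
  with that \<open>0 < k\<close> t0 le eq show ?thesis
    by blast
qed

lemma SUP_PsiClass_ratio_attained:
  fixes psi phi :: "real^'n \<Rightarrow> real"
  assumes psi: "psi \<in> PsiClass" and phi: "phi \<in> PsiClass"
  defines "M \<equiv> SUP t\<in>Omega. psi t / phi t"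
  obtains t1 where "0 < M" "t1 \<in> Omega" "psi t1 = M * phi t1" "\<And>t. t \<in> Omega \<Longrightarrow> psi t \<le> M * phi t"
proof -
  obtain t1 where t1: "t1 \<in> Omega" and max: "\<And>t. t \<in> Omega \<Longrightarrow> psi t / phi t \<le> psi t1 / phi t1"
    using continuous_attains_sup[OF compact_Omega Omega_nonempty continuous_on_PsiClass_ratio[OF psi phi]]
    by blast
  define k where "k = psi t1 / phi t1"
  have le: "psi t \<le> k * phi t" if "t \<in> Omega" for t
    using max[OF that] PsiClass_pos[OF phi that] by (simp add: k_def divide_le_eq)
  have eq: "psi t1 = k * phi t1" and "0 < k"
    using PsiClass_pos[OF phi t1] PsiClass_pos[OF psi t1] by (simp_all add: k_def)
  have "M = k"
    unfolding M_def using PsiClass_pos[OF phi] le t1 eq by (rule SUP_ratio_eqI)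
  with that \<open>0 < k\<close> t1 le eq show ?thesis
    by blast
qed

lemma SUP_dual_fun_ratio:
  fixes psi phi :: "real^'n \<Rightarrow> real"
  assumes psi: "psi \<in> PsiClass" and phi: "phi \<in> PsiClass"
  shows "(SUP s\<in>Omega. dual_fun psi s / dual_fun phi s) = 1 / (INF t\<in>Omega. psi t / phi t)"
proof -
  define m where "m = (INF t\<in>Omega. psi t / phi t)"
  obtain t0 where "0 < m" and t0: "t0 \<in> Omega" "psi t0 = m * phi t0"
    and le: "\<And>t. t \<in> Omega \<Longrightarrow> m * phi t \<le> psi t"
    using INF_PsiClass_ratio_attained[OF psi phi] unfolding m_def by blast
  obtain s0 where "s0 \<in> Omega" "dual_fun phi s0 = m * dual_fun psi s0"
    using dual_fun_scaled_attained[OF psi phi \<open>0 < m\<close> le t0] .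
  moreover have "m * dual_fun psi s \<le> dual_fun phi s" if "s \<in> Omega" for s
    using dual_fun_antimono_scaled[OF psi phi \<open>0 < m\<close> le that] .
  ultimately show ?thesis
    unfolding m_def[symmetric] using \<open>0 < m\<close> dual_fun_pos[OF phi]
    by (intro SUP_ratio_eqI[where z = s0]) (auto simp: field_simps)
qed

lemma INF_dual_fun_ratio:
  fixes psi phi :: "real^'n \<Rightarrow> real"
  assumes psi: "psi \<in> PsiClass" and phi: "phi \<in> PsiClass"
  shows "(INF s\<in>Omega. dual_fun psi s / dual_fun phi s) = 1 / (SUP t\<in>Omega. psi t / phi t)"
proof -
  define M where "M = (SUP t\<in>Omega. psi t / phi t)"
  obtain t1 where "0 < M" and t1: "t1 \<in> Omega" "psi t1 = M * phi t1"
    and le: "\<And>t. t \<in> Omega \<Longrightarrow> psi t \<le> M * phi t"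
    using SUP_PsiClass_ratio_attained[OF psi phi] unfolding M_def by blast
  then have k: "0 < 1 / M" and le': "\<And>t. t \<in> Omega \<Longrightarrow> 1 / M * psi t \<le> phi t"
    and t1': "phi t1 = 1 / M * psi t1"
    using le t1 by (auto simp: field_simps)
  obtain s1 where "s1 \<in> Omega" "dual_fun psi s1 = 1 / M * dual_fun phi s1"
    using dual_fun_scaled_attained[OF phi psi k le' t1(1) t1'] .
  moreover have "1 / M * dual_fun phi s \<le> dual_fun psi s" if "s \<in> Omega" for s
    using dual_fun_antimono_scaled[OF phi psi k le' that] .
  ultimately show ?thesis
    unfolding M_def[symmetric] using dual_fun_pos[OF phi]
    by (intro INF_ratio_eqI[where z = s1]) auto
qed

lemma PsiClass_ge_iff_dual_fun_le:
  fixes psi phi :: "real^'n \<Rightarrow> real"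
  assumes psi: "psi \<in> PsiClass" and phi: "phi \<in> PsiClass"
  shows "(\<forall>t\<in>Omega. phi t \<le> psi t) \<longleftrightarrow> (\<forall>s\<in>Omega. dual_fun psi s \<le> dual_fun phi s)"
proof
  assume "\<forall>t\<in>Omega. phi t \<le> psi t"
  then show "\<forall>s\<in>Omega. dual_fun psi s \<le> dual_fun phi s"
    using dual_fun_antimono_scaled[OF psi phi, of 1] by simp
next
  assume dual_le: "\<forall>s\<in>Omega. dual_fun psi s \<le> dual_fun phi s"
  define m where "m = (INF t\<in>Omega. psi t / phi t)"
  obtain t0 where "0 < m" and t0: "t0 \<in> Omega" "psi t0 = m * phi t0"
    and le: "\<And>t. t \<in> Omega \<Longrightarrow> m * phi t \<le> psi t"
    using INF_PsiClass_ratio_attained[OF psi phi] unfolding m_def by blast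
  obtain s0 where s0: "s0 \<in> Omega" "dual_fun phi s0 = m * dual_fun psi s0"
    using dual_fun_scaled_attained[OF psi phi \<open>0 < m\<close> le t0] .
  then have "dual_fun phi s0 \<le> m * dual_fun phi s0"
    using dual_le \<open>0 < m\<close> by (metis mult_left_mono less_imp_le)
  then have "1 \<le> m"
    using dual_fun_pos[OF phi s0(1)] by (simp add: mult_le_cancel_right1)
  show "\<forall>t\<in>Omega. phi t \<le> psi t"
  proof
    fix t :: "real^'n"
    assume "t \<in> Omega"
    then have "phi t \<le> m * phi t"
      using \<open>1 \<le> m\<close> PsiClass_pos[OF phi \<open>t \<in> Omega\<close>] by (simp add: mult_le_cancel_right1)
    with le[OF \<open>t \<in> Omega\<close>] show "phi t \<le> psi t"
      by linarith
  qed
qed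

section \<open>Comparison of the norms\<close>

lemma psi_norm_cmult: "psi_norm (\<lambda>t. c * f t) x = c * psi_norm f x"
  by (simp add: psi_norm_def Let_def)

lemma psi_norm_mono_fun:
  fixes f g :: "real^'n \<Rightarrow> real" and x :: "'n \<Rightarrow> 'a::real_normed_vector"
  assumes "\<And>t. t \<in> Omega \<Longrightarrow> f t \<le> g t"
  shows "psi_norm f x \<le> psi_norm g x"
proof -
  have "0 \<le> (\<chi> i. norm (x i))"
    by (simp add: less_eq_vec_def)
  then obtain a t where "0 \<le> a" "t \<in> Omega" "(\<chi> i. norm (x i)) = a *\<^sub>R t"
    by (rule nonneg_vec_decompose)
  then show ?thesis
    using assms by (simp add: psi_norm_eq_hom_ext hom_ext_scaleR hom_ext_Omega mult_left_mono)
qed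

lemma psi_norm_scaleR:
  assumes "0 \<le> c"
  shows "psi_norm psi (\<lambda>i. c *\<^sub>R x i) = c * psi_norm psi x"
proof -
  have "(\<chi> i. norm (c *\<^sub>R x i)) = c *\<^sub>R (\<chi> i. norm (x i))"
    using assms by (simp add: vec_eq_iff)
  then show ?thesis
    using assms by (simp add: psi_norm_eq_hom_ext hom_ext_scaleR)
qed

lemma norm_le_psi_norm:
  assumes "psi \<in> PsiClass"
  shows "norm (x i) \<le> psi_norm psi x"
  using component_le_hom_ext[OF assms, of "\<chi> i. norm (x i)" i]
  by (simp add: psi_norm_eq_hom_ext less_eq_vec_def)

lemma bdd_above_psi_dual_norm:
  fixes f :: "'n::finite \<Rightarrow> 'a::real_normed_vector \<Rightarrow> real"
  assumes psi: "psi \<in> PsiClass" and f: "\<And>i. bounded_linear (f i)"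
  shows "bdd_above ((\<lambda>x. \<bar>\<Sum>i\<in>UNIV. f i (x i)\<bar>) ` {x. psi_norm psi x \<le> 1})"
proof -
  obtain K where K: "\<And>i v. norm (f i v) \<le> norm v * K i" "\<And>i. 0 \<le> K i"
    using bounded_linear.nonneg_bounded[OF f] by metis
  have "\<bar>\<Sum>i\<in>UNIV. f i (x i)\<bar> \<le> (\<Sum>i\<in>UNIV. K i)" if "psi_norm psi x \<le> 1" for x
  proof -
    have "\<bar>f i (x i)\<bar> \<le> norm (x i) * K i" for i
      using K(1)[of i "x i"] by simp
    also have "norm (x i) * K i \<le> K i" for i
      using norm_le_psi_norm[OF psi, of x i] that K(2)[of i] by (simp add: mult_left_le_one_le)
    finally have "\<And>i. \<bar>f i (x i)\<bar> \<le> K i" .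
    then show ?thesis
      by (intro order_trans[OF sum_abs sum_mono])
  qed
  then show ?thesis
    by (intro bdd_aboveI[where M = "\<Sum>i\<in>UNIV. K i"]) auto
qed

lemma psi_dual_norm_antimono_scaled:
  fixes psi phi :: "real^'n \<Rightarrow> real" and f :: "'n \<Rightarrow> 'a::real_normed_vector \<Rightarrow> real"
  assumes psi: "psi \<in> PsiClass" and c: "0 < c"
    and le: "\<And>x :: 'n \<Rightarrow> 'a. psi_norm psi x \<le> c * psi_norm phi x"
    and f: "\<And>i. bounded_linear (f i)"
  shows "psi_dual_norm phi f \<le> c * psi_dual_norm psi f"
  unfolding psi_dual_norm_def
proof (rule cSUP_least)
  have "psi_norm phi (\<lambda>i. 0 :: 'a) \<le> 1"
    by (simp add: psi_norm_def)
  then show "{x :: 'n \<Rightarrow> 'a. psi_norm phi x \<le> 1} \<noteq> {}"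
    by blast
next
  fix x :: "'n \<Rightarrow> 'a"
  assume x: "x \<in> {x. psi_norm phi x \<le> 1}"
  define z where "z = (\<lambda>i. (1 / c) *\<^sub>R x i)"
  have "c * psi_norm phi x \<le> c * 1"
    using x c by (intro mult_left_mono) auto
  then have "psi_norm psi x \<le> c"
    using le[of x] by simp
  then have "psi_norm psi z \<le> 1"
    using c by (simp add: z_def psi_norm_scaleR)
  then have "\<bar>\<Sum>i\<in>UNIV. f i (z i)\<bar> \<le> (SUP x\<in>{x. psi_norm psi x \<le> 1}. \<bar>\<Sum>i\<in>UNIV. f i (x i)\<bar>)"
    by (intro cSUP_upper bdd_above_psi_dual_norm[OF psi f]) simp
  moreover have "\<bar>\<Sum>i\<in>UNIV. f i (x i)\<bar> = c * \<bar>\<Sum>i\<in>UNIV. f i (z i)\<bar>"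
    using c by (simp add: z_def linear_cmul[OF bounded_linear.linear[OF f]] abs_mult
      flip: sum_divide_distrib)
  ultimately show "\<bar>\<Sum>i\<in>UNIV. f i (x i)\<bar> \<le> c * (SUP x\<in>{x. psi_norm psi x \<le> 1}. \<bar>\<Sum>i\<in>UNIV. f i (x i)\<bar>)"
    using c by simp
qed

theorem proposition3p5:
  fixes psi phi :: "real^'n \<Rightarrow> real"
  assumes n2: "CARD('n) \<ge> 2"
    and psi: "psi \<in> PsiClass" and phi: "phi \<in> PsiClass"
  defines "m \<equiv> (INF t\<in>Omega. psi t / phi t)"
    and "M \<equiv> (SUP t\<in>Omega. psi t / phi t)"
    and "ms \<equiv> (INF s\<in>Omega. dual_fun psi s / dual_fun phi s)"
    and "Ms \<equiv> (SUP s\<in>Omega. dual_fun psi s / dual_fun phi s)"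
  shows "(\<forall>t\<in>Omega. 1 / real CARD('n) \<le> m \<and> m \<le> psi t / phi t
            \<and> psi t / phi t \<le> M \<and> M \<le> real CARD('n))
    \<and> (\<forall>t\<in>Omega. 1 / real CARD('n) \<le> ms \<and> ms \<le> dual_fun psi t / dual_fun phi t
            \<and> dual_fun psi t / dual_fun phi t \<le> Ms \<and> Ms \<le> real CARD('n))
    \<and> (m * Ms = 1 \<and> M * ms = 1)
    \<and> (\<forall>x :: 'n \<Rightarrow> 'a::real_normed_vector.
          m * psi_norm phi x \<le> psi_norm psi x \<and> psi_norm psi x \<le> M * psi_norm phi x)
    \<and> (\<forall>f :: 'n \<Rightarrow> 'a \<Rightarrow> real. (\<forall>i. bounded_linear (f i)) \<longrightarrow>
          (1 / M) * psi_dual_norm phi f \<le> psi_dual_norm psi f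
          \<and> psi_dual_norm psi f \<le> (1 / m) * psi_dual_norm phi f)
    \<and> ((\<forall>t\<in>Omega. psi t \<ge> phi t) \<longleftrightarrow> (\<forall>s\<in>Omega. dual_fun psi s \<le> dual_fun phi s))
    \<and> ((\<forall>t\<in>Omega. psi t \<le> phi t) \<longleftrightarrow> (\<forall>s\<in>Omega. dual_fun psi s \<ge> dual_fun phi s))"
proof -
  have ratio_bounds: "\<forall>t\<in>Omega. 1 / real CARD('n) \<le> m \<and> m \<le> psi t / phi t
      \<and> psi t / phi t \<le> M \<and> M \<le> real CARD('n)"
    unfolding m_def M_def using PsiClass_bounds[OF psi] PsiClass_bounds[OF phi]
    by (intro ballI ratio_INF_SUP_bounds[OF Omega_nonempty]) auto
  have dual_ratio_bounds: "\<forall>t\<in>Omega. 1 / real CARD('n) \<le> ms \<and> ms \<le> dual_fun psi t / dual_fun phi t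
      \<and> dual_fun psi t / dual_fun phi t \<le> Ms \<and> Ms \<le> real CARD('n)"
    unfolding ms_def Ms_def using dual_fun_bounds[OF psi] dual_fun_bounds[OF phi]
    by (intro ballI ratio_INF_SUP_bounds[OF Omega_nonempty]) auto
  have "0 < m" "0 < M"
    using ratio_bounds axis_in_Omega by (fastforce intro: order_less_le_trans[rotated])+
  have extrema: "m * Ms = 1 \<and> M * ms = 1"
    using SUP_dual_fun_ratio[OF psi phi] INF_dual_fun_ratio[OF psi phi] \<open>0 < m\<close> \<open>0 < M\<close>
    by (simp add: m_def M_def ms_def Ms_def)
  have "m * phi t \<le> psi t" "psi t \<le> M * phi t" if "t \<in> Omega" for t
    using ratio_bounds PsiClass_pos[OF phi that] that by (auto simp: le_divide_eq divide_le_eq)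
  then have norms: "m * psi_norm phi x \<le> psi_norm psi x" "psi_norm psi x \<le> M * psi_norm phi x"
    for x :: "'n \<Rightarrow> 'a"
    by (auto simp flip: psi_norm_cmult intro: psi_norm_mono_fun)
  have dual_norms: "(1 / M) * psi_dual_norm phi f \<le> psi_dual_norm psi f"
    "psi_dual_norm psi f \<le> (1 / m) * psi_dual_norm phi f"
    if "\<forall>i. bounded_linear (f i)" for f :: "'n \<Rightarrow> 'a \<Rightarrow> real"
    using psi_dual_norm_antimono_scaled[OF psi \<open>0 < M\<close> norms(2)]
      psi_dual_norm_antimono_scaled[OF phi, of "1 / m" psi] norms(1) that \<open>0 < m\<close> \<open>0 < M\<close>
    by (auto simp: field_simps)
  show ?thesis
    using ratio_bounds dual_ratio_bounds extrema norms dual_norms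
      PsiClass_ge_iff_dual_fun_le[OF psi phi] PsiClass_ge_iff_dual_fun_le[OF phi psi]
    by blast
qed

end
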